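(* Let $\mathbf u:[0,T]\to(0,\infty)^N$ be a differentiable solution of the geometric flux-differencing scheme $\frac{d\mathbf u}{dt}+2WD\mathbf w=\mathbf 0$, where $w_i=\sqrt{a_iu_i}$, $W=\operatorname{diag}(\mathbf w)$, and let $\mathbf v:[0,T]\to\mathbb R^N$ solve the linearized equation $$\frac{d\mathbf v}{dt}+\operatorname{diag}(D\mathbf w)AW^{-1}\mathbf v+WDAW^{-1}\mathbf v=\mathbf 0,$$ with $\mathbf w=\mathbf w(t)$ built from $\mathbf u(t)$. Then $\mathbf z:=W^{-1}\mathbf v$ satisfies $\frac{d\mathbf z}{dt}+DA\mathbf z=\mathbf 0$, the quantity $\sum_iH_{ii}v_i^2/u_i$ is constant in time, and $$\|\mathbf v(t)\|_H^2\le\frac{\max_iu_i(t)}{\min_iu_i(0)}\,\|\mathbf v(0)\|_H^2\qquad\text{for all }t\in[0,T].$$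
   Context: $H=\operatorname{diag}(H_{ii})$, $H_{ii}>0$; $Q\in\mathbb R^{N\times N}$ with $Q+Q^T=0$; $D=H^{-1}Q$; $\mathbf a$ constant in time with $a_i>0$, $A=\operatorname{diag}(\mathbf a)$; $\|\mathbf v\|_H^2=\sum_iH_{ii}v_i^2$. *)

theory Defs
  imports "HOL-Analysis.Analysis"
begin

text \<open>Vectors in R^N are real^'n for a finite index type 'n. The diagonal matrices
H and A are represented by their diagonals (vectors H and a).\<close>

definition Dmat :: "real^'n \<Rightarrow> real^'n^'n \<Rightarrow> real^'n^'n" where
  "Dmat H Q = (\<chi> i j. Q $ i $ j / H $ i)"

definition wvec :: "real^'n \<Rightarrow> real^'n \<Rightarrow> real^'n" where
  "wvec a u = (\<chi> i. sqrt (a $ i * u $ i))"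

definition Hnorm2 :: "real^'n \<Rightarrow> real^'n \<Rightarrow> real" where
  "Hnorm2 H v = (\<Sum>i\<in>UNIV. H $ i * (v $ i)^2)"

end

theory Submission
  imports Defs
begin

text \<open>Since \<open>w\<^sub>i\<^sup>2 = a\<^sub>i u\<^sub>i\<close>, the scheme for \<open>u\<close> says exactly \<open>w' = - A D w\<close>; rescaling
  \<open>z = W\<^sup>-\<^sup>1 v\<close> then cancels the term \<open>diag(D w) A W\<^sup>-\<^sup>1 v\<close> and leaves \<open>z' = - D A z\<close>.
  Because \<open>H D = Q\<close> is skew-symmetric, the energy \<open>\<Sum>\<^sub>i H\<^sub>i a\<^sub>i z\<^sub>i\<^sup>2 = \<Sum>\<^sub>i H\<^sub>i v\<^sub>i\<^sup>2 / u\<^sub>i\<close>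
  has derivative \<open>-2 y\<^sup>T Q y = 0\<close> with \<open>y = A z\<close>. The norm bound follows by comparing
  \<open>u(t)\<close> with its maximum and \<open>u(0)\<close> with its minimum in this conserved quantity.\<close>

lemma has_vector_derivative_vec_nth_iff:
  fixes f :: "real \<Rightarrow> real^'n"
  shows "(f has_vector_derivative f') (at t within S) \<longleftrightarrow>
    (\<forall>i. ((\<lambda>s. f s $ i) has_real_derivative f' $ i) (at t within S))"
  unfolding has_vector_derivative_def has_real_derivative_iff_has_vector_derivative
  by (subst has_derivative_componentwise_within) (auto simp: Basis_vec_def inner_axis)

lemma skew_matrix_quadratic_form_zero:
  fixes Q :: "real^'n^'n"
  assumes "\<And>i j. Q $ i $ j + Q $ j $ i = 0"
  shows "y \<bullet> (Q *v y) = 0"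
proof -
  have Q_transpose: "transpose Q = - Q"
    using assms by (simp add: transpose_def vec_eq_iff eq_neg_iff_add_eq_0 add.commute)
  have "y \<bullet> (Q *v y) = (transpose Q *v y) \<bullet> y"
    by (metis dot_lmul_matrix inner_commute transpose_matrix_vector)
  also have "\<dots> = - (y \<bullet> (Q *v y))"
    using Q_transpose
    by (simp add: matrix_vector_mult_def inner_vec_def sum_negf mult.commute)
  finally have "y \<bullet> (Q *v y) = - (y \<bullet> (Q *v y))" .
  then show ?thesis by simp
qed

lemma Dmat_mult_vec_nth:
  assumes "H $ i \<noteq> 0"
  shows "H $ i * (Dmat H Q *v y) $ i = (Q *v y) $ i"
  using assms by (simp add: Dmat_def matrix_vector_mult_def sum_distrib_left)

lemma wvec_has_vector_derivative:
  fixes u :: "real \<Rightarrow> real^'n"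
  assumes a_pos: "\<And>i. a $ i > 0" and u_pos: "\<And>i. u t $ i > 0"
    and u_deriv: "(u has_vector_derivative u') (at t within S)"
  shows "((\<lambda>s. wvec a (u s)) has_vector_derivative
           (\<chi> i. a $ i * u' $ i / (2 * wvec a (u t) $ i))) (at t within S)"
  unfolding has_vector_derivative_vec_nth_iff
proof
  fix i
  have "((\<lambda>s. u s $ i) has_real_derivative u' $ i) (at t within S)"
    using u_deriv by (simp add: has_vector_derivative_vec_nth_iff)
  moreover have "a $ i * u t $ i > 0"
    using a_pos u_pos by simp
  ultimately show "((\<lambda>s. wvec a (u s) $ i) has_real_derivative
      (\<chi> i. a $ i * u' $ i / (2 * wvec a (u t) $ i)) $ i) (at t within S)"
    unfolding wvec_def
    by (auto intro!: derivative_eq_intros simp: divide_simps)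
qed

lemma wvec_rescaled_square:
  assumes "a $ i > 0" "u $ i > 0"
  shows "a $ i * (x / wvec a u $ i)^2 = x^2 / u $ i"
  using assms by (simp add: wvec_def power_divide)

lemma rescaled_linearization_has_vector_derivative:
  fixes D :: "real^'n^'n" and u v :: "real \<Rightarrow> real^'n"
  assumes a_pos: "\<And>i. a $ i > 0" and u_pos: "\<And>i. u t $ i > 0"
    and u_ode: "(u has_vector_derivative
          (- (\<chi> i. 2 * wvec a (u t) $ i * (D *v wvec a (u t)) $ i))) (at t within S)"
    and v_ode: "(v has_vector_derivative
          (- (\<chi> i. (D *v wvec a (u t)) $ i * a $ i * v t $ i / wvec a (u t) $ i
                  + wvec a (u t) $ i *
                    (D *v (\<chi> j. a $ j * v t $ j / wvec a (u t) $ j)) $ i)))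
        (at t within S)"
  shows "((\<lambda>s. \<chi> i. v s $ i / wvec a (u s) $ i) has_vector_derivative
           - (D *v (\<chi> j. a $ j * (v t $ j / wvec a (u t) $ j)))) (at t within S)"
  unfolding has_vector_derivative_vec_nth_iff
proof
  fix i
  define w where "w = wvec a (u t)"
  have w_pos: "w $ i > 0"
    using a_pos u_pos by (simp add: w_def wvec_def)
  have "((\<lambda>s. wvec a (u s) $ i) has_real_derivative
      a $ i * (- (2 * w $ i * (D *v w) $ i)) / (2 * w $ i)) (at t within S)"
    using wvec_has_vector_derivative[OF a_pos u_pos u_ode]
    unfolding has_vector_derivative_vec_nth_iff w_def by auto
  then have "((\<lambda>s. wvec a (u s) $ i) has_real_derivative - (a $ i * (D *v w) $ i)) (at t within S)"
    using w_pos by simp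
  moreover have "((\<lambda>s. v s $ i) has_real_derivative - ((D *v w) $ i * a $ i * v t $ i / w $ i
      + w $ i * (D *v (\<chi> j. a $ j * v t $ j / w $ j)) $ i)) (at t within S)"
    using v_ode by (simp add: has_vector_derivative_vec_nth_iff flip: w_def)
  ultimately show "((\<lambda>s. (\<chi> i. v s $ i / wvec a (u s) $ i) $ i) has_real_derivative
      (- (D *v (\<chi> j. a $ j * (v t $ j / wvec a (u t) $ j)))) $ i) (at t within S)"
    using w_pos by (auto intro!: derivative_eq_intros simp flip: w_def simp: field_simps power2_eq_square)
qed

lemma skew_flow_energy_constant:
  fixes z :: "real \<Rightarrow> real^'n"
  assumes H_nz: "\<And>i. H $ i \<noteq> 0" and Q_skew: "\<And>i j. Q $ i $ j + Q $ j $ i = 0"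
    and "convex S"
    and z_ode: "\<And>t. t \<in> S \<Longrightarrow>
       (z has_vector_derivative - (Dmat H Q *v (\<chi> j. a $ j * z t $ j))) (at t within S)"
    and "s \<in> S" "t \<in> S"
  shows "(\<Sum>i\<in>UNIV. H $ i * a $ i * (z s $ i)^2) = (\<Sum>i\<in>UNIV. H $ i * a $ i * (z t $ i)^2)"
proof -
  define E where "E t = (\<Sum>i\<in>UNIV. H $ i * a $ i * (z t $ i)^2)" for t
  have "(E has_real_derivative 0) (at t within S)" if "t \<in> S" for t
  proof -
    define y where "y = (\<chi> j. a $ j * z t $ j)"
    have "\<And>i. ((\<lambda>s. z s $ i) has_real_derivative - (Dmat H Q *v y) $ i) (at t within S)"
      using z_ode[OF \<open>t \<in> S\<close>] unfolding has_vector_derivative_vec_nth_iff y_def by simp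
    then have "(E has_real_derivative
        (\<Sum>i\<in>UNIV. - 2 * y $ i * (H $ i * (Dmat H Q *v y) $ i))) (at t within S)"
      unfolding E_def
      by (auto intro!: derivative_eq_intros sum.cong simp: y_def power2_eq_square algebra_simps)
    also have "(\<Sum>i\<in>UNIV. - 2 * y $ i * (H $ i * (Dmat H Q *v y) $ i)) = - 2 * (y \<bullet> (Q *v y))"
      by (simp add: Dmat_mult_vec_nth[OF H_nz] inner_vec_def sum_distrib_left mult.assoc)
    finally show ?thesis
      by (simp add: skew_matrix_quadratic_form_zero[OF Q_skew])
  qed
  then obtain c where "\<forall>t\<in>S. E t = c"
    using has_field_derivative_zero_constant[OF \<open>convex S\<close>] by blast
  with \<open>s \<in> S\<close> \<open>t \<in> S\<close> show ?thesis
    by (simp add: E_def)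
qed

lemma Hnorm2_le_by_weighted_invariant:
  fixes H p q x y :: "real^'n"
  assumes H_nonneg: "\<And>i. H $ i \<ge> 0" and p_pos: "\<And>i. p $ i > 0" and q_pos: "\<And>i. q $ i > 0"
    and invariant: "(\<Sum>i\<in>UNIV. H $ i * (x $ i)^2 / p $ i) = (\<Sum>i\<in>UNIV. H $ i * (y $ i)^2 / q $ i)"
  shows "Hnorm2 H x \<le> Max (range (\<lambda>i. p $ i)) / Min (range (\<lambda>i. q $ i)) * Hnorm2 H y"
proof -
  define M where "M = Max (range (\<lambda>i. p $ i))"
  define m where "m = Min (range (\<lambda>i. q $ i))"
  have p_le: "p $ i \<le> M" for i
    unfolding M_def by (rule Max_ge) auto
  have "m \<in> range (\<lambda>i. q $ i)"
    unfolding m_def by (rule Min_in) auto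
  then have m_pos: "m > 0"
    using q_pos by auto
  have M_pos: "M > 0"
    using p_pos p_le less_le_trans by blast
  have "Hnorm2 H x = (\<Sum>i\<in>UNIV. H $ i * (x $ i)^2 / p $ i * p $ i)"
    unfolding Hnorm2_def using p_pos by (simp add: less_imp_neq[symmetric])
  also have "\<dots> \<le> (\<Sum>i\<in>UNIV. H $ i * (x $ i)^2 / p $ i * M)"
    using H_nonneg p_pos p_le by (intro sum_mono mult_left_mono) (auto intro!: divide_nonneg_pos)
  also have "\<dots> = M * (\<Sum>i\<in>UNIV. H $ i * (y $ i)^2 / q $ i)"
    unfolding invariant[symmetric] sum_distrib_left by (simp add: mult.commute)
  also have "\<dots> \<le> M * (\<Sum>i\<in>UNIV. H $ i * (y $ i)^2 / m)"
    unfolding m_def using M_pos H_nonneg q_pos m_pos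
    by (intro mult_left_mono sum_mono divide_left_mono Min_le) (auto simp: less_imp_le)
  also have "\<dots> = M / m * Hnorm2 H y"
    by (simp add: Hnorm2_def sum_divide_distrib[symmetric])
  finally show ?thesis
    unfolding M_def m_def .
qed

theorem mainTheorem6:
  fixes H a :: "real^'n" and Q :: "real^'n^'n" and T :: real
    and u v :: "real \<Rightarrow> real^'n"
  assumes H_pos: "\<And>i. H $ i > 0"
    and Q_skew: "\<And>i j. Q $ i $ j + Q $ j $ i = 0"
    and a_pos: "\<And>i. a $ i > 0"
    and u_pos: "\<And>t i. t \<in> {0..T} \<Longrightarrow> u t $ i > 0"
    and u_ode: "\<And>t. t \<in> {0..T} \<Longrightarrow>
       (u has_vector_derivative
          (- (\<chi> i. 2 * wvec a (u t) $ i * (Dmat H Q *v wvec a (u t)) $ i))) (at t within {0..T})"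
    and v_ode: "\<And>t. t \<in> {0..T} \<Longrightarrow>
       (v has_vector_derivative
          (- (\<chi> i. (Dmat H Q *v wvec a (u t)) $ i * a $ i * v t $ i / wvec a (u t) $ i
                  + wvec a (u t) $ i *
                    (Dmat H Q *v (\<chi> j. a $ j * v t $ j / wvec a (u t) $ j)) $ i)))
        (at t within {0..T})"
  defines "z \<equiv> (\<lambda>t. \<chi> i. v t $ i / wvec a (u t) $ i)"
  shows "(\<forall>t\<in>{0..T}. (z has_vector_derivative
              (- (Dmat H Q *v (\<chi> j. a $ j * z t $ j)))) (at t within {0..T}))
       \<and> (\<forall>t\<in>{0..T}. (\<Sum>i\<in>UNIV. H $ i * (v t $ i)^2 / u t $ i)
                       = (\<Sum>i\<in>UNIV. H $ i * (v 0 $ i)^2 / u 0 $ i))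
       \<and> (\<forall>t\<in>{0..T}. Hnorm2 H (v t)
              \<le> (Max (range (\<lambda>i. u t $ i)) / Min (range (\<lambda>i. u 0 $ i))) * Hnorm2 H (v 0))"
proof -
  have z_ode: "(z has_vector_derivative (- (Dmat H Q *v (\<chi> j. a $ j * z t $ j)))) (at t within {0..T})"
    if t: "t \<in> {0..T}" for t
    using rescaled_linearization_has_vector_derivative[OF a_pos u_pos[OF t] u_ode[OF t] v_ode[OF t]]
    by (simp add: z_def)
  have energy: "(\<Sum>i\<in>UNIV. H $ i * (v t $ i)^2 / u t $ i) = (\<Sum>i\<in>UNIV. H $ i * a $ i * (z t $ i)^2)"
    if t: "t \<in> {0..T}" for t
    using wvec_rescaled_square[OF a_pos u_pos[OF t]]
    by (intro sum.cong) (simp_all add: z_def mult.assoc)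
  have conserved: "(\<Sum>i\<in>UNIV. H $ i * (v t $ i)^2 / u t $ i) = (\<Sum>i\<in>UNIV. H $ i * (v 0 $ i)^2 / u 0 $ i)"
    if t: "t \<in> {0..T}" for t
  proof -
    from t have zero: "0 \<in> {0..T}" by simp
    have "(\<Sum>i\<in>UNIV. H $ i * a $ i * (z t $ i)^2) = (\<Sum>i\<in>UNIV. H $ i * a $ i * (z 0 $ i)^2)"
      by (rule skew_flow_energy_constant[OF less_imp_neq[OF H_pos, symmetric] Q_skew
            convex_real_interval(5) z_ode t zero])
    then show ?thesis
      unfolding energy[OF t] energy[OF zero] .
  qed
  have bound: "Hnorm2 H (v t)
      \<le> (Max (range (\<lambda>i. u t $ i)) / Min (range (\<lambda>i. u 0 $ i))) * Hnorm2 H (v 0)"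
    if t: "t \<in> {0..T}" for t
    using t by (intro Hnorm2_le_by_weighted_invariant[OF less_imp_le[OF H_pos] u_pos u_pos conserved]) auto
  show ?thesis
    using z_ode conserved bound by blast
qed

end
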